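(* Let $\phi : A \to B$ be a positive linear map between monotone complete ordered vector spaces $A$ and $B$. Assume that $A$ is a vector lattice admitting some faithful positive linear functional. If $\phi$ is sequentially normal, then $\phi$ is normal.
   Context: An ordered vector space $W$ is monotone complete if every non-empty upward directed subset of $W$ that is bounded above has a supremum in $W$ (in particular every bounded above increasing sequence then has a supremum). A positive linear functional $\psi$ on an ordered vector space $W$ with positive cone $W_+$ is faithful if $\psi(a)>0$ for every $a\in W_+\setminus\{0\}$. A positive linear map $\phi:A\to B$ between monotone complete ordered vector spaces is called normal if $\phi(\sup J)=\sup_{j\in J}\phi(j)$ for every non-empty upper bounded upward directed subset $J$ of $A$, and sequentially normal if $\phi(\sup_n j_n)=\sup_n\phi(j_n)$ for every upper bounded increasing sequence $(j_n)$ in $A$. *)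

theory Defs
  imports Complex_Main
begin

definition ov_upper_bound :: "'a::order set \<Rightarrow> 'a \<Rightarrow> bool" where
  "ov_upper_bound S u \<longleftrightarrow> (\<forall>x\<in>S. x \<le> u)"

definition ov_bdd_above :: "'a::order set \<Rightarrow> bool" where
  "ov_bdd_above S \<longleftrightarrow> (\<exists>u. ov_upper_bound S u)"

definition ov_is_sup :: "'a::order set \<Rightarrow> 'a \<Rightarrow> bool" where
  "ov_is_sup S s \<longleftrightarrow> ov_upper_bound S s \<and> (\<forall>u. ov_upper_bound S u \<longrightarrow> s \<le> u)"

definition upward_directed :: "'a::order set \<Rightarrow> bool" where
  "upward_directed S \<longleftrightarrow> (\<forall>x\<in>S. \<forall>y\<in>S. \<exists>z\<in>S. x \<le> z \<and> y \<le> z)"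

definition monotone_complete :: "'a::ordered_real_vector itself \<Rightarrow> bool" where
  "monotone_complete _ \<longleftrightarrow>
     (\<forall>S::'a set. S \<noteq> {} \<and> upward_directed S \<and> ov_bdd_above S \<longrightarrow> (\<exists>s. ov_is_sup S s))"

definition positive_map :: "('a::ordered_real_vector \<Rightarrow> 'b::ordered_real_vector) \<Rightarrow> bool" where
  "positive_map f \<longleftrightarrow> (\<forall>x. 0 \<le> x \<longrightarrow> 0 \<le> f x)"

definition faithful_functional :: "('a::ordered_real_vector \<Rightarrow> real) \<Rightarrow> bool" where
  "faithful_functional \<psi> \<longleftrightarrow> (\<forall>a. 0 \<le> a \<and> a \<noteq> 0 \<longrightarrow> \<psi> a > 0)"

definition normal_map :: "('a::ordered_real_vector \<Rightarrow> 'b::ordered_real_vector) \<Rightarrow> bool" where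
  "normal_map \<phi> \<longleftrightarrow> (\<forall>J s. J \<noteq> {} \<and> upward_directed J \<and> ov_bdd_above J \<and> ov_is_sup J s
       \<longrightarrow> ov_is_sup (\<phi> ` J) (\<phi> s))"

definition seq_normal_map :: "('a::ordered_real_vector \<Rightarrow> 'b::ordered_real_vector) \<Rightarrow> bool" where
  "seq_normal_map \<phi> \<longleftrightarrow> (\<forall>(j::nat \<Rightarrow> 'a) s. incseq j \<and> ov_bdd_above (range j) \<and> ov_is_sup (range j) s
       \<longrightarrow> ov_is_sup (range (\<phi> \<circ> j)) (\<phi> s))"

end

theory Submission
  imports Defs
begin

text \<open>Let \<open>\<psi>\<close> be a faithful positive functional on \<open>A\<close> and \<open>J\<close> a bounded directed set with
supremum \<open>s\<close>. Since \<open>\<psi>\<close> is monotone, \<open>\<psi>(J)\<close> is bounded, and directedness yields an increasing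
sequence \<open>j\<^sub>n\<close> in \<open>J\<close> with \<open>\<psi>(j\<^sub>n) \<rightarrow> sup \<psi>(J)\<close>. This sequence is cofinal in the order sense:
if \<open>t\<close> bounds all \<open>j\<^sub>n\<close> and \<open>x \<in> J\<close>, choose \<open>k \<in> J\<close> above \<open>x\<close> and \<open>j\<^sub>n\<close>; then
\<open>(x - t)\<^sup>+ \<le> k - j\<^sub>n\<close>, so \<open>\<psi>((x - t)\<^sup>+)\<close> is arbitrarily small, hence \<open>(x - t)\<^sup>+ = 0\<close> by
faithfulness, i.e. \<open>x \<le> t\<close>. Thus \<open>s\<close> is also the supremum of the sequence, and sequential
normality makes \<open>\<phi>(s)\<close> the least upper bound of the \<open>\<phi>(j\<^sub>n)\<close>, hence of \<open>\<phi>(J)\<close>.\<close>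

lemma linear_positive_mono:
  fixes f :: "'a::ordered_real_vector \<Rightarrow> 'b::ordered_real_vector"
  assumes "linear f" "positive_map f"
  shows "mono f"
proof
  fix x y :: 'a assume "x \<le> y"
  then have "0 \<le> f (y - x)" using assms(2) unfolding positive_map_def by simp
  also have "f (y - x) = f y - f x" using assms(1) by (simp add: linear_diff)
  finally show "f x \<le> f y" by simp
qed

lemma ov_is_sup_cofinal_subset:
  assumes "ov_is_sup J s" "K \<subseteq> J" "\<And>t. ov_upper_bound K t \<Longrightarrow> ov_upper_bound J t"
  shows "ov_is_sup K s"
  using assms unfolding ov_is_sup_def ov_upper_bound_def by blast

lemma ov_is_sup_superset:
  assumes "ov_is_sup K s" "K \<subseteq> J" "ov_upper_bound J s"
  shows "ov_is_sup J s"
  using assms unfolding ov_is_sup_def ov_upper_bound_def by blast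

lemma directed_incseq_approx_Sup:
  fixes f :: "'a::order \<Rightarrow> real"
  assumes "J \<noteq> {}" "upward_directed J" "bdd_above (f ` J)" "mono f"
  obtains j where "incseq j" "range j \<subseteq> J" "\<And>n. Sup (f ` J) - 1 / real (Suc n) < f (j n)"
proof -
  have "\<exists>y\<in>J. x \<le> y \<and> Sup (f ` J) - 1 / real (Suc n) < f y" if "x \<in> J" for x n
  proof -
    obtain z where "z \<in> J" "Sup (f ` J) - 1 / real (Suc n) < f z"
      using less_cSupE[of "Sup (f ` J) - 1 / real (Suc n)" "f ` J"] assms(1) by auto
    moreover obtain y where "y \<in> J" "x \<le> y" "z \<le> y"
      using assms(2) \<open>x \<in> J\<close> \<open>z \<in> J\<close> unfolding upward_directed_def by blast
    moreover have "f z \<le> f y" using assms(4) \<open>z \<le> y\<close> by (rule monoD)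
    ultimately show ?thesis by force
  qed
  then obtain g where g: "\<And>x n. x \<in> J \<Longrightarrow>
      g x n \<in> J \<and> x \<le> g x n \<and> Sup (f ` J) - 1 / real (Suc n) < f (g x n)"
    by metis
  obtain x0 where "x0 \<in> J" using assms(1) by blast
  define j where "j = rec_nat (g x0 0) (\<lambda>n x. g x (Suc n))"
  have j_simps: "j 0 = g x0 0" "j (Suc n) = g (j n) (Suc n)" for n
    unfolding j_def by simp_all
  have j_in: "j n \<in> J \<and> Sup (f ` J) - 1 / real (Suc n) < f (j n)" for n
  proof (induction n)
    case 0
    show ?case using g[OF \<open>x0 \<in> J\<close>, of 0] by (simp only: j_simps)
  next
    case (Suc n)
    show ?case using g[of "j n" "Suc n"] Suc by (simp only: j_simps)
  qed
  show thesis
  proof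
    show "incseq j" by (rule incseq_SucI) (use g j_in j_simps in auto)
  qed (use j_in in auto)
qed

text \<open>This is where the lattice structure enters: \<open>(x - t)\<^sup>+\<close> is dominated by \<open>k - a\<close> whenever
\<open>a \<le> t\<close>, \<open>a \<le> k\<close> and \<open>x \<le> k\<close>.\<close>

lemma faithful_le_if_gap_small:
  fixes \<psi> :: "'a::{ordered_real_vector, lattice} \<Rightarrow> real"
  assumes "linear \<psi>" "positive_map \<psi>" "faithful_functional \<psi>"
    and gap: "\<And>\<epsilon>. \<epsilon> > 0 \<Longrightarrow> \<exists>a k. a \<le> t \<and> a \<le> k \<and> x \<le> k \<and> \<psi> k - \<psi> a < \<epsilon>"
  shows "x \<le> t"
proof -
  define p where "p = sup (x - t) 0"
  have "\<psi> p < \<epsilon>" if "\<epsilon> > 0" for \<epsilon>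
  proof -
    obtain a k where "a \<le> t" "a \<le> k" "x \<le> k" "\<psi> k - \<psi> a < \<epsilon>"
      using gap \<open>\<epsilon> > 0\<close> by blast
    then have "p \<le> k - a" unfolding p_def by (simp add: diff_mono)
    then have "\<psi> p \<le> \<psi> (k - a)"
      by (rule monoD[OF linear_positive_mono[OF assms(1,2)]])
    also have "\<dots> = \<psi> k - \<psi> a" using assms(1) by (rule linear_diff)
    finally show ?thesis using \<open>\<psi> k - \<psi> a < \<epsilon>\<close> by linarith
  qed
  then have "\<not> \<psi> p > 0" by (meson less_irrefl)
  moreover have "0 \<le> p" unfolding p_def by simp
  ultimately have "p = 0" using assms(3) unfolding faithful_functional_def by blast
  moreover have "x - t \<le> p" unfolding p_def by simp
  ultimately show "x \<le> t" by simp
qed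

lemma directed_set_has_cofinal_incseq:
  fixes \<psi> :: "'a::{ordered_real_vector, lattice} \<Rightarrow> real" and J :: "'a set"
  assumes "linear \<psi>" "positive_map \<psi>" "faithful_functional \<psi>"
    and "J \<noteq> {}" "upward_directed J" "ov_bdd_above J"
  obtains j where "incseq j" "range j \<subseteq> J"
    "\<And>t. ov_upper_bound (range j) t \<Longrightarrow> ov_upper_bound J t"
proof -
  have mono: "mono \<psi>" using assms(1,2) by (rule linear_positive_mono)
  obtain u where "ov_upper_bound J u" using assms(6) unfolding ov_bdd_above_def by blast
  then have "bdd_above (\<psi> ` J)"
    by (intro bdd_aboveI[of _ "\<psi> u"]) (auto simp: ov_upper_bound_def intro: monoD[OF mono])
  then obtain j where j: "incseq j" "range j \<subseteq> J"
    and j_approx: "\<And>n. Sup (\<psi> ` J) - 1 / real (Suc n) < \<psi> (j n)"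
    using directed_incseq_approx_Sup assms(4,5) mono by blast
  have "x \<le> t" if t: "ov_upper_bound (range j) t" and "x \<in> J" for t x
    using assms(1-3)
  proof (rule faithful_le_if_gap_small)
    fix \<epsilon> :: real assume "\<epsilon> > 0"
    then obtain n where n: "1 / real (Suc n) < \<epsilon>" using nat_approx_posE by blast
    obtain k where "k \<in> J" "x \<le> k" "j n \<le> k"
      using assms(5) \<open>x \<in> J\<close> j(2) unfolding upward_directed_def by blast
    have "\<psi> k \<le> Sup (\<psi> ` J)" using \<open>bdd_above (\<psi> ` J)\<close> \<open>k \<in> J\<close> by (simp add: cSup_upper)
    then have "\<psi> k - \<psi> (j n) < \<epsilon>" using j_approx[of n] n by linarith
    moreover have "j n \<le> t" using t unfolding ov_upper_bound_def by simp
    ultimately show "\<exists>a k. a \<le> t \<and> a \<le> k \<and> x \<le> k \<and> \<psi> k - \<psi> a < \<epsilon>"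
      using \<open>x \<le> k\<close> \<open>j n \<le> k\<close> by blast
  qed
  with j show thesis by (intro that) (auto simp: ov_upper_bound_def)
qed

theorem mainTheorem2:
  fixes \<phi> :: "'a::{ordered_real_vector, lattice} \<Rightarrow> 'b::ordered_real_vector"
  assumes "monotone_complete TYPE('a)"
    and "monotone_complete TYPE('b)"
    and "linear \<phi>"
    and "positive_map \<phi>"
    and "\<exists>\<psi> :: 'a \<Rightarrow> real. linear \<psi> \<and> positive_map \<psi> \<and> faithful_functional \<psi>"
    and "seq_normal_map \<phi>"
  shows "normal_map \<phi>"
  unfolding normal_map_def
proof (intro allI impI)
  fix J :: "'a set" and s :: 'a
  assume J: "J \<noteq> {} \<and> upward_directed J \<and> ov_bdd_above J \<and> ov_is_sup J s"
  obtain \<psi> :: "'a \<Rightarrow> real" where "linear \<psi>" "positive_map \<psi>" "faithful_functional \<psi>"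
    using assms(5) by blast
  then obtain j where j: "incseq j" "range j \<subseteq> J"
    "\<And>t. ov_upper_bound (range j) t \<Longrightarrow> ov_upper_bound J t"
    using directed_set_has_cofinal_incseq J by blast
  have "ov_is_sup (range j) s"
    using J j(2,3) by (blast intro: ov_is_sup_cofinal_subset)
  then have "ov_is_sup (\<phi> ` range j) (\<phi> s)"
    using assms(6) j(1) unfolding seq_normal_map_def ov_bdd_above_def ov_is_sup_def
    by (metis image_comp)
  moreover have "ov_upper_bound (\<phi> ` J) (\<phi> s)"
    using J monoD[OF linear_positive_mono[OF assms(3,4)]]
    unfolding ov_is_sup_def ov_upper_bound_def by blast
  ultimately show "ov_is_sup (\<phi> ` J) (\<phi> s)"
    using j(2) by (blast intro: ov_is_sup_superset)
qed

end
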